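(* Let $R$ be as in the standing setup and let $I, J$ be nonzero ideals of $R$. Then $v(I+J)=v(I)\cup v(J)$ if and only if $v(I\cap J)=v(I)\cap v(J)$.
   Context: Standing setup: $k$ is a field and $R$ is a complete local domain with $k\subseteq R\subseteq k[[t]]$, residue field $k$, maximal ideal $m$, and nonzero conductor $(R:k[[t]])\neq 0$. Let $v$ denote the $t$-adic valuation on $k[[t]]$. For a nonzero ideal $I$ of $R$, $v(I)=\{v(a): a\in I, a\neq 0\}$. *)

theory Defs
  imports "HOL-Computational_Algebra.Formal_Power_Series"
begin

text \<open>k[[t]] is modelled by the type 'a fps with 'a a field; the t-adic valuation
  of a nonzero series is subdegree.\<close>

definition fps_subring :: "'a::field fps set \<Rightarrow> bool" where
  "fps_subring R \<longleftrightarrow> (\<forall>c. fps_const c \<in> R) \<and>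
     (\<forall>a\<in>R. \<forall>b\<in>R. a + b \<in> R \<and> a - b \<in> R \<and> a * b \<in> R)"

definition fps_ideal :: "'a::field fps set \<Rightarrow> 'a fps set \<Rightarrow> bool" where
  "fps_ideal R I \<longleftrightarrow> I \<subseteq> R \<and> 0 \<in> I \<and>
     (\<forall>a\<in>I. \<forall>b\<in>I. a + b \<in> I) \<and> (\<forall>r\<in>R. \<forall>a\<in>I. r * a \<in> I)"

text \<open>R is local with maximal ideal m and residue field k (the constants surject onto R/m).\<close>
definition local_res_field_k :: "'a::field fps set \<Rightarrow> 'a fps set \<Rightarrow> bool" where
  "local_res_field_k R m \<longleftrightarrow> fps_ideal R m \<and> m \<noteq> R \<and>
     (\<forall>x\<in>R. x \<notin> m \<longrightarrow> (\<exists>y\<in>R. x * y = 1)) \<and>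
     (\<forall>x\<in>R. \<exists>c. x - fps_const c \<in> m)"

definition conductor :: "'a::field fps set \<Rightarrow> 'a fps set" where
  "conductor R = {f. \<forall>g. f * g \<in> R}"

definition val_set :: "'a::field fps set \<Rightarrow> nat set" where
  "val_set I = subdegree ` (I - {0})"

definition ideal_sum :: "'a::field fps set \<Rightarrow> 'a fps set \<Rightarrow> 'a fps set" where
  "ideal_sum I J = {a + b | a b. a \<in> I \<and> b \<in> J}"

end

theory Submission
  imports Defs
begin

(* Only the k-vector-space structure of I and J matters, together with the
   fact that each contains a "tail" t^N k[[t]] (a consequence of the nonzero conductor).
   The inclusions v(I \<inter> J) \<subseteq> v(I) \<inter> v(J) and v(I) \<union> v(J) \<subseteq> v(I+J) are trivial, so
   the theorem reduces to two implications, each proved by downward induction on an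
   order of vanishing k (starting from the tail bound N, where everything is trivial):
   - if v(I) \<inter> v(J) \<subseteq> v(I \<inter> J), then a sum a+b of elements vanishing to order k has its
     valuation in v(I) \<union> v(J): when the leading terms of a and b cancel, a common element
     c \<in> I \<inter> J of that valuation is used to push both summands to order k+1;
   - if v(I+J) \<subseteq> v(I) \<union> v(J), then every x \<in> I+J vanishing to order k splits as i+j with
     i \<in> I, j \<in> J both vanishing to order k; applied to a - \<mu> b for a \<in> I, b \<in> J of the same
     valuation n, this yields an element of I \<inter> J of valuation n.
   Both steps rely on the elementary elimination: subtracting a scalar multiple of a
   series with leading coefficient in degree k raises the order of vanishing past k. *)

section \<open>Orders of vanishing\<close>

definition vanishes_below :: "nat \<Rightarrow> 'a::field fps \<Rightarrow> bool" where
  "vanishes_below n f \<longleftrightarrow> (\<forall>k<n. fps_nth f k = 0)"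

lemma vanishes_below_iff: "vanishes_below n f \<longleftrightarrow> f = 0 \<or> n \<le> subdegree f"
  unfolding vanishes_below_def
  by (metis bot_nat_0.extremum_uniqueI fps_zero_nth le_trans linorder_not_less
      nat_le_linear nth_less_subdegree_zero subdegree_geI)

lemma vanishes_below_subdegree: "vanishes_below (subdegree f) f"
  by (simp add: vanishes_below_iff)

lemma vanishes_below_mono: "vanishes_below n f \<Longrightarrow> m \<le> n \<Longrightarrow> vanishes_below m f"
  unfolding vanishes_below_def by auto

lemma vanishes_below_Suc: "vanishes_below n f \<Longrightarrow> fps_nth f n = 0 \<Longrightarrow> vanishes_below (Suc n) f"
  unfolding vanishes_below_def using less_Suc_eq by auto

lemma vanishes_below_add: "vanishes_below n f \<Longrightarrow> vanishes_below n g \<Longrightarrow> vanishes_below n (f + g)"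
  and vanishes_below_diff: "vanishes_below n f \<Longrightarrow> vanishes_below n g \<Longrightarrow> vanishes_below n (f - g)"
  and vanishes_below_smult: "vanishes_below n f \<Longrightarrow> vanishes_below n (fps_const c * f)"
  unfolding vanishes_below_def by auto

lemma subdegree_eqI: "vanishes_below n f \<Longrightarrow> fps_nth f n \<noteq> 0 \<Longrightarrow> subdegree f = n"
  by (metis fps_nonzero_nth le_antisym subdegree_leI vanishes_below_iff)

lemma vanishes_below_eliminate:
  assumes "vanishes_below n f" "vanishes_below n g" "fps_nth g n \<noteq> 0"
  shows "vanishes_below (Suc n) (f - fps_const (fps_nth f n / fps_nth g n) * g)"
  using assms by (intro vanishes_below_Suc vanishes_below_diff vanishes_below_smult) auto

lemma bounded_downward_induct:
  assumes base: "\<And>k. N \<le> k \<Longrightarrow> P k"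
    and step: "\<And>k. k < N \<Longrightarrow> P (Suc k) \<Longrightarrow> P k"
  shows "P k"
proof (cases "N \<le> k")
  case False
  then have "k \<le> N" by simp
  then show ?thesis
    by (rule inc_induct) (auto intro: base step)
qed (rule base)

section \<open>Subspaces of k[[t]] and their value sets\<close>

definition k_subspace :: "'a::field fps set \<Rightarrow> bool" where
  "k_subspace S \<longleftrightarrow> 0 \<in> S \<and> (\<forall>a\<in>S. \<forall>b\<in>S. a + b \<in> S) \<and> (\<forall>c. \<forall>a\<in>S. fps_const c * a \<in> S)"

definition contains_tail :: "nat \<Rightarrow> 'a::field fps set \<Rightarrow> bool" where
  "contains_tail N S \<longleftrightarrow> (\<forall>f. vanishes_below N f \<longrightarrow> f \<in> S)"

lemma k_subspace_zero: "k_subspace S \<Longrightarrow> 0 \<in> S"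
  and k_subspace_add: "k_subspace S \<Longrightarrow> a \<in> S \<Longrightarrow> b \<in> S \<Longrightarrow> a + b \<in> S"
  and k_subspace_smult: "k_subspace S \<Longrightarrow> a \<in> S \<Longrightarrow> fps_const c * a \<in> S"
  unfolding k_subspace_def by blast+

lemma k_subspace_diff:
  assumes "k_subspace S" "a \<in> S" "b \<in> S"
  shows "a - b \<in> S"
proof -
  have "a + fps_const (-1) * b \<in> S"
    using assms by (intro k_subspace_add k_subspace_smult)
  then show ?thesis by (metis fps_const_1_eq_1 fps_const_neg mult_minus1 diff_conv_add_uminus)
qed

lemma k_subspace_ideal_sum:
  assumes I: "k_subspace I" and J: "k_subspace J"
  shows "k_subspace (ideal_sum I J)"
  unfolding k_subspace_def ideal_sum_def
proof (intro conjI ballI allI; clarify?)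
  show "\<exists>a b. 0 = a + b \<and> a \<in> I \<and> b \<in> J"
    using I J by (intro exI[of _ 0]) (simp add: k_subspace_zero)
next
  fix a b a' b' assume "a \<in> I" "b \<in> J" "a' \<in> I" "b' \<in> J"
  then show "\<exists>x y. a + b + (a' + b') = x + y \<and> x \<in> I \<and> y \<in> J"
    using I J by (intro exI[of _ "a + a'"] exI[of _ "b + b'"]) (auto intro: k_subspace_add)
next
  fix c a b assume "a \<in> I" "b \<in> J"
  then show "\<exists>x y. fps_const c * (a + b) = x + y \<and> x \<in> I \<and> y \<in> J"
    using I J by (intro exI[of _ "fps_const c * a"] exI[of _ "fps_const c * b"])
      (auto intro: k_subspace_smult simp: distrib_left)
qed

lemma ideal_sum_supset:
  assumes "k_subspace I" "k_subspace J"
  shows "I \<subseteq> ideal_sum I J" "J \<subseteq> ideal_sum I J"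
  unfolding ideal_sum_def using assms k_subspace_zero by force+

lemma val_setI: "a \<in> I \<Longrightarrow> a \<noteq> 0 \<Longrightarrow> subdegree a \<in> val_set I"
  unfolding val_set_def by blast

lemma val_setE:
  assumes "n \<in> val_set I"
  obtains a where "a \<in> I" "a \<noteq> 0" "subdegree a = n"
  using assms unfolding val_set_def by blast

lemma val_set_mono: "I \<subseteq> J \<Longrightarrow> val_set I \<subseteq> val_set J"
  unfolding val_set_def by blast

lemma val_set_sum_bound:
  fixes I J :: "'a::field fps set"
  assumes I: "k_subspace I" and J: "k_subspace J" and tail: "contains_tail N J"
    and common: "val_set I \<inter> val_set J \<subseteq> val_set (I \<inter> J)"
  shows "val_set (ideal_sum I J) \<subseteq> val_set I \<union> val_set J"
proof -
  have sum_val: "subdegree (a + b) \<in> val_set I \<union> val_set J"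
    if "a \<in> I" "b \<in> J" "vanishes_below k a" "vanishes_below k b" "a + b \<noteq> 0" for k a b
    using that
  proof (induction k arbitrary: a b rule: bounded_downward_induct[of N])
    case (1 k)
    then have "a \<in> J" using tail vanishes_below_mono unfolding contains_tail_def by blast
    then have "a + b \<in> J" using J "1.prems" by (blast intro: k_subspace_add)
    then show ?case using "1.prems" by (auto intro: val_setI)
  next
    case (2 k)
    have sum_k: "vanishes_below k (a + b)" using "2.prems" by (blast intro: vanishes_below_add)
    consider (sum_lead) "fps_nth (a + b) k \<noteq> 0"
      | (both_vanish) "fps_nth (a + b) k = 0" "fps_nth a k = 0"
      | (cancel) "fps_nth (a + b) k = 0" "fps_nth a k \<noteq> 0"
      by blast
    then show ?case
    proof cases
      case sum_lead
      then have sd: "subdegree (a + b) = k" using sum_k by (rule subdegree_eqI[rotated])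
      from sum_lead consider (a_lead) "fps_nth a k \<noteq> 0" | (b_lead) "fps_nth b k \<noteq> 0"
        by (cases "fps_nth a k = 0") auto
      then show ?thesis
      proof cases
        case a_lead
        then have "a \<noteq> 0" "subdegree a = k" using "2.prems" subdegree_eqI by auto
        then show ?thesis using sd "2.prems" val_setI[of a I] by simp
      next
        case b_lead
        then have "b \<noteq> 0" "subdegree b = k" using "2.prems" subdegree_eqI by auto
        then show ?thesis using sd "2.prems" val_setI[of b J] by simp
      qed
    next
      case both_vanish
      then show ?thesis using "2.prems" "2.IH" by (auto intro: vanishes_below_Suc)
    next
      case cancel
      \<comment> \<open>The leading terms cancel: both have valuation k, so I \<inter> J has an element of valuation k.\<close>
      have "fps_nth b k \<noteq> 0" using cancel by auto
      then have "a \<noteq> 0" "b \<noteq> 0" "subdegree a = k" "subdegree b = k"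
        using cancel "2.prems" subdegree_eqI by auto
      then have "k \<in> val_set I \<inter> val_set J"
        using "2.prems" val_setI[of a I] val_setI[of b J] by simp
      then obtain c where c: "c \<in> I \<inter> J" "c \<noteq> 0" "subdegree c = k"
        using common by (blast elim: val_setE)
      define a' where "a' = a - fps_const (fps_nth a k / fps_nth c k) * c"
      define b' where "b' = (a + b) - a'"
      have "vanishes_below (Suc k) a'" unfolding a'_def
        using c "2.prems" vanishes_below_subdegree[of c] by (intro vanishes_below_eliminate) auto
      moreover have "vanishes_below (Suc k) b'" unfolding b'_def
        using vanishes_below_diff[OF vanishes_below_Suc[OF sum_k cancel(1)] calculation] .
      moreover have "a' \<in> I" unfolding a'_def
        using I c "2.prems" by (blast intro: k_subspace_diff k_subspace_smult)
      moreover have "b' \<in> J" unfolding b'_def a'_def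
        using J c "2.prems" by (simp add: k_subspace_add k_subspace_smult)
      moreover have "a' + b' = a + b" unfolding b'_def by simp
      ultimately show ?thesis using "2.IH" "2.prems" by metis
    qed
  qed
  show ?thesis
  proof
    fix n assume "n \<in> val_set (ideal_sum I J)"
    then obtain a b where "a \<in> I" "b \<in> J" "a + b \<noteq> 0" "n = subdegree (a + b)"
      unfolding val_set_def ideal_sum_def by auto
    then show "n \<in> val_set I \<union> val_set J"
      using sum_val[of a b 0] by (simp add: vanishes_below_def)
  qed
qed

lemma ideal_sum_filtration_split:
  fixes I J :: "'a::field fps set"
  assumes I: "k_subspace I" and J: "k_subspace J" and tail: "contains_tail N I"
    and no_new: "val_set (ideal_sum I J) \<subseteq> val_set I \<union> val_set J"
    and "x \<in> ideal_sum I J" "vanishes_below k x"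
  shows "\<exists>i\<in>I. \<exists>j\<in>J. x = i + j \<and> vanishes_below k i \<and> vanishes_below k j"
  using assms(5,6)
proof (induction k arbitrary: x rule: bounded_downward_induct[of N])
  case (1 k)
  then have "x \<in> I" using tail vanishes_below_mono unfolding contains_tail_def by blast
  moreover have "0 \<in> J" using J by (rule k_subspace_zero)
  ultimately show ?case using "1.prems"
    by (intro bexI[of _ x] bexI[of _ 0]) (auto simp: vanishes_below_def)
next
  case (2 k)
  have weaken: "vanishes_below (Suc k) f \<Longrightarrow> vanishes_below k f" for f :: "'a fps"
    by (erule vanishes_below_mono) simp
  show ?case
  proof (cases "fps_nth x k = 0")
    case True
    then have "vanishes_below (Suc k) x" using "2.prems"(2) by (rule vanishes_below_Suc[rotated])
    then show ?thesis using "2.IH"[OF "2.prems"(1)] weaken by blast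
  next
    case False
    \<comment> \<open>Remove the leading term of x with an element y of I or J of the same valuation.\<close>
    have "subdegree x = k" using "2.prems"(2) False by (rule subdegree_eqI)
    then have "k \<in> val_set I \<union> val_set J"
      using no_new "2.prems"(1) False val_setI[of x "ideal_sum I J"] by auto
    then obtain y where y: "y \<in> I \<or> y \<in> J" "y \<noteq> 0" "subdegree y = k"
      by (blast elim: val_setE)
    define ly where "ly = fps_const (fps_nth x k / fps_nth y k) * y"
    have ly_low: "vanishes_below k ly"
      unfolding ly_def using vanishes_below_smult[OF vanishes_below_subdegree[of y]] y(3) by simp
    have ly_in: "ly \<in> I \<or> ly \<in> J"
      unfolding ly_def using y(1) I J k_subspace_smult by blast
    then have "ly \<in> ideal_sum I J" using ideal_sum_supset[OF I J] by blast
    then have "x - ly \<in> ideal_sum I J"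
      using k_subspace_diff[OF k_subspace_ideal_sum[OF I J] "2.prems"(1)] by blast
    moreover have "vanishes_below (Suc k) (x - ly)"
      unfolding ly_def using "2.prems"(2) y vanishes_below_subdegree[of y]
      by (intro vanishes_below_eliminate) auto
    ultimately obtain i j where ij: "i \<in> I" "j \<in> J" "x - ly = i + j"
      "vanishes_below k i" "vanishes_below k j"
      using "2.IH" weaken by blast
    have x_eq: "x = i + j + ly" using ij(3) by (metis diff_add_cancel)
    show ?thesis
    proof (cases "ly \<in> I")
      case True
      have "x = (i + ly) + j" using x_eq by (simp add: algebra_simps)
      then show ?thesis using ij ly_low True k_subspace_add[OF I ij(1) True]
        by (blast intro: vanishes_below_add)
    next
      case False
      then have "ly \<in> J" using ly_in by blast
      have "x = i + (j + ly)" using x_eq by (simp add: algebra_simps)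
      then show ?thesis using ij ly_low k_subspace_add[OF J ij(2) \<open>ly \<in> J\<close>]
        by (blast intro: vanishes_below_add)
    qed
  qed
qed

lemma val_set_Int_bound:
  fixes I J :: "'a::field fps set"
  assumes I: "k_subspace I" and J: "k_subspace J" and tail: "contains_tail N I"
    and no_new: "val_set (ideal_sum I J) \<subseteq> val_set I \<union> val_set J"
  shows "val_set I \<inter> val_set J \<subseteq> val_set (I \<inter> J)"
proof
  fix n assume "n \<in> val_set I \<inter> val_set J"
  then obtain a b where a: "a \<in> I" "a \<noteq> 0" "subdegree a = n"
    and b: "b \<in> J" "b \<noteq> 0" "subdegree b = n"
    by (blast elim: val_setE)
  define \<mu>b where "\<mu>b = fps_const (fps_nth a n / fps_nth b n) * b"
  have \<mu>b_J: "\<mu>b \<in> J" unfolding \<mu>b_def using k_subspace_smult[OF J b(1)] .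
  have "a - \<mu>b \<in> ideal_sum I J"
    using k_subspace_diff[OF k_subspace_ideal_sum[OF I J]] a(1) \<mu>b_J ideal_sum_supset[OF I J]
    by blast
  moreover have "vanishes_below (Suc n) (a - \<mu>b)"
  proof -
    have "vanishes_below n a" "vanishes_below n b"
      using a(3) b(3) vanishes_below_subdegree[of a] vanishes_below_subdegree[of b] by simp_all
    moreover have "fps_nth b n \<noteq> 0" using b(2,3) nth_subdegree_nonzero by blast
    ultimately show ?thesis unfolding \<mu>b_def by (rule vanishes_below_eliminate)
  qed
  ultimately obtain i j where ij: "i \<in> I" "j \<in> J" "a - \<mu>b = i + j" "vanishes_below (Suc n) i"
    by (blast dest: ideal_sum_filtration_split[OF I J tail no_new])
  \<comment> \<open>c = a - i = \<mu>b + j lies in I \<inter> J and agrees with a up to degree n.\<close>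
  define c where "c = a - i"
  have "c \<in> I" unfolding c_def using k_subspace_diff[OF I a(1) ij(1)] .
  moreover have "c \<in> J"
    using ij(3) k_subspace_add[OF J \<mu>b_J ij(2)] unfolding c_def by (simp add: algebra_simps)
  moreover have "vanishes_below n c" "fps_nth c n \<noteq> 0"
  proof -
    have "vanishes_below n a" using a(3) vanishes_below_subdegree[of a] by simp
    moreover have "vanishes_below n i" using ij(4) by (rule vanishes_below_mono) simp
    ultimately show "vanishes_below n c" unfolding c_def by (rule vanishes_below_diff)
    have "fps_nth i n = 0" using ij(4) unfolding vanishes_below_def by simp
    moreover have "fps_nth a n \<noteq> 0" using a(2,3) nth_subdegree_nonzero by blast
    ultimately show "fps_nth c n \<noteq> 0" unfolding c_def by simp
  qed
  then have "subdegree c = n" "c \<noteq> 0" by (auto intro: subdegree_eqI)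
  ultimately show "n \<in> val_set (I \<inter> J)" using val_setI[of c "I \<inter> J"] by simp
qed

theorem val_set_sum_iff_Int:
  fixes I J :: "'a::field fps set"
  assumes I: "k_subspace I" and J: "k_subspace J"
    and tail_I: "contains_tail N I" and tail_J: "contains_tail M J"
  shows "val_set (ideal_sum I J) = val_set I \<union> val_set J \<longleftrightarrow>
         val_set (I \<inter> J) = val_set I \<inter> val_set J"
proof -
  have "val_set I \<union> val_set J \<subseteq> val_set (ideal_sum I J)"
    using ideal_sum_supset[OF I J] val_set_mono by blast
  moreover have "val_set (I \<inter> J) \<subseteq> val_set I \<inter> val_set J"
    using val_set_mono by blast
  ultimately show ?thesis
    using val_set_sum_bound[OF I J tail_J] val_set_Int_bound[OF I J tail_I] by blast
qed

section \<open>Ideals of R\<close>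

lemma ideal_k_subspace: "fps_subring R \<Longrightarrow> fps_ideal R I \<Longrightarrow> k_subspace I"
  unfolding k_subspace_def fps_subring_def fps_ideal_def by blast

text \<open>A nonzero ideal contains f a k[[t]] for a nonzero conductor element f and a nonzero a \<in> I,
  hence a tail t^N k[[t]].\<close>
lemma ideal_contains_tail:
  fixes R I :: "'a::field fps set"
  assumes ideal: "fps_ideal R I" and "I \<noteq> {0}" and "conductor R \<noteq> {0}"
  shows "\<exists>N. contains_tail N I"
proof -
  have "0 \<in> I" "I \<subseteq> R" using ideal unfolding fps_ideal_def by auto
  then have "0 \<in> conductor R" unfolding conductor_def by auto
  then obtain f where f: "f \<in> conductor R" "f \<noteq> 0" using assms(3) by blast
  obtain a where a: "a \<in> I" "a \<noteq> 0" using \<open>0 \<in> I\<close> assms(2) by blast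
  have "h \<in> I" if h: "vanishes_below (subdegree (f * a)) h" for h
  proof (cases "h = 0")
    case True
    then show ?thesis using \<open>0 \<in> I\<close> by simp
  next
    case False
    have "f * a dvd h"
      using f a False h by (simp add: fps_dvd_iff vanishes_below_iff)
    then obtain g where "h = f * a * g" by (rule dvdE)
    then have g: "h = (f * g) * a" by (simp add: ac_simps)
    have "f * g \<in> R" using f(1) unfolding conductor_def by blast
    then show ?thesis using ideal a(1) g unfolding fps_ideal_def by blast
  qed
  then show ?thesis unfolding contains_tail_def by blast
qed

text \<open>The main result: the nonzero conductor provides the tails.\<close>
theorem lemma1p1:
  fixes R m I J :: "'a::field fps set"
  assumes "fps_subring R"
    and "local_res_field_k R m"
    and "conductor R \<noteq> {0}"
    and "fps_ideal R I" and "I \<noteq> {0}"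
    and "fps_ideal R J" and "J \<noteq> {0}"
  shows "val_set (ideal_sum I J) = val_set I \<union> val_set J \<longleftrightarrow>
         val_set (I \<inter> J) = val_set I \<inter> val_set J"
proof -
  obtain N where "contains_tail N I" using ideal_contains_tail assms by blast
  moreover obtain M where "contains_tail M J" using ideal_contains_tail assms by blast
  ultimately show ?thesis
    using val_set_sum_iff_Int ideal_k_subspace assms by blast
qed

end
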